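(* Let $s\in W_p$ be a reflection in a wall of $\overline{C}$, $\lambda\in C\cap X(T)$, $\mu\in\overline{C}\cap X(T)$ with $\mathrm{Stab}_{W_p}(\mu)=\{1,s\}$, and let $w\in W^{I,\lambda}$. Then $ws\cdot\lambda\in C_I\cap X(T)$ if and only if $wsw^{-1}\notin W_{I,p}$.
   Context: $G$ connected reductive over algebraically closed field of characteristic $p>0$ satisfying Jantzen's standard assumptions, $p\ge h$ (Coxeter number). $T$ a maximal torus, $X(T)$ its character group, $\Phi\supseteq\Phi^+\supseteq\Phi_s$ roots, positive roots and simple roots, $\rho$ the half-sum of positive roots, $\alpha^\vee$ coroots. $W_p$ is the affine Weyl group, generated by the reflections $s_{\alpha,mp}=t_{mp\alpha}s_\alpha$ ($\alpha\in\Phi$, $m\in\mathbb{Z}$, $t_\gamma$ translation by $\gamma$), acting on $X(T)\otimes\mathbb{R}$ by the dot action $w\cdot\nu=w(\nu+\rho)-\rho$; stabilisers are for the dot action. Fix $I\subseteq\Phi_s$; $W_{I,p}\subseteq W_p$ is generated by $s_\alpha$ and translations by $mp\alpha$ for $\alpha\in I$, $m\in\mathbb{Z}$. $C=\{x:0<\langle x+\rho,\alpha^\vee\rangle<p\ \forall\alpha\in\Phi^+\}$ (fundamental alcove), $\overline{C}$ the same with non-strict inequalities; $C_I=\{x:0<\langle x+\rho,\alpha^\vee\rangle<p\ \forall\alpha\in\Phi^+\cap\mathbb{Z}I\}$, $\overline{C}_I$ with non-strict inequalities. $W^{I,\lambda}=\{w\in W_p: w\cdot\lambda\in\overline{C}_I\}$.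 *)

theory Defs
  imports "HOL-Analysis.Analysis" "HOL-Computational_Algebra.Primes"
begin

text \<open>Model: X(T) is a full-rank lattice in a Euclidean space V = X(T) (x) R, equipped
with a W-invariant inner product; the coroot pairing is <x, a^v> = 2 (x.a)/(a.a).\<close>

definition pair :: "'a::real_inner \<Rightarrow> 'a \<Rightarrow> real" where
  "pair x a = 2 * (x \<bullet> a) / (a \<bullet> a)"

definition zspan :: "'a::real_vector set \<Rightarrow> 'a set" where
  "zspan S = {x. \<exists>F c. finite F \<and> F \<subseteq> S \<and> x = (\<Sum>b\<in>F. of_int (c b :: int) *\<^sub>R b)}"

definition nnzspan :: "'a::real_vector set \<Rightarrow> 'a set" where
  "nnzspan S = {x. \<exists>F c. finite F \<and> F \<subseteq> S \<and> (\<forall>b\<in>F. c b \<ge> (0::int))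
                    \<and> x = (\<Sum>b\<in>F. of_int (c b) *\<^sub>R b)}"

definition root_datum :: "'a::euclidean_space set \<Rightarrow> 'a set \<Rightarrow> bool" where
  "root_datum X Phi \<longleftrightarrow>
     (\<exists>B. independent B \<and> span B = UNIV \<and> X = zspan B) \<and>
     finite Phi \<and> Phi \<subseteq> X \<and> 0 \<notin> Phi \<and>
     (\<forall>a\<in>Phi. \<forall>b\<in>Phi. b - pair b a *\<^sub>R a \<in> Phi) \<and>
     (\<forall>a\<in>Phi. \<forall>c::real. c *\<^sub>R a \<in> Phi \<longrightarrow> c = 1 \<or> c = -1) \<and>
     (\<forall>x\<in>X. \<forall>a\<in>Phi. pair x a \<in> \<int>)"

definition is_base :: "'a::euclidean_space set \<Rightarrow> 'a set \<Rightarrow> bool" where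
  "is_base Phi S \<longleftrightarrow> S \<subseteq> Phi \<and> independent S \<and>
     Phi \<subseteq> nnzspan S \<union> uminus ` nnzspan S"

definition pos_roots :: "'a::euclidean_space set \<Rightarrow> 'a set \<Rightarrow> 'a set" where
  "pos_roots Phi S = Phi \<inter> nnzspan S"

definition rho :: "'a::euclidean_space set \<Rightarrow> 'a set \<Rightarrow> 'a" where
  "rho Phi S = (1/2) *\<^sub>R (\<Sum>a\<in>pos_roots Phi S. a)"

text \<open>Derived group simply connected: fundamental weights exist in X.\<close>
definition sc_derived :: "'a::euclidean_space set \<Rightarrow> 'a set \<Rightarrow> bool" where
  "sc_derived X S \<longleftrightarrow>
     (\<forall>a\<in>S. \<exists>w\<in>X. \<forall>b\<in>S. pair w b = (if b = a then 1 else 0))"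

text \<open>Coxeter number (maximum over the irreducible components) = max <rho, a^v> + 1.\<close>
definition coxeter :: "'a::euclidean_space set \<Rightarrow> 'a set \<Rightarrow> real" where
  "coxeter Phi S = Max (insert 0 ((\<lambda>a. pair (rho Phi S) a + 1) ` pos_roots Phi S))"

definition aff_refl :: "'a::real_inner \<Rightarrow> real \<Rightarrow> 'a \<Rightarrow> 'a" where
  "aff_refl a k = (\<lambda>x. x - pair x a *\<^sub>R a + k *\<^sub>R a)"

definition transl :: "'a::real_vector \<Rightarrow> 'a \<Rightarrow> 'a" where
  "transl v = (\<lambda>x. x + v)"

text \<open>Group generated by a set of bijections closed under inverses (here all
generators are involutions or come with their inverse translations).\<close>
inductive_set gen_group :: "('a \<Rightarrow> 'a) set \<Rightarrow> ('a \<Rightarrow> 'a) set" for G where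
  gen_id: "id \<in> gen_group G"
| gen_step: "g \<in> G \<Longrightarrow> w \<in> gen_group G \<Longrightarrow> g \<circ> w \<in> gen_group G"

definition Wp :: "'a::euclidean_space set \<Rightarrow> nat \<Rightarrow> ('a \<Rightarrow> 'a) set" where
  "Wp Phi p = gen_group {aff_refl a (of_int m * real p) | a m. a \<in> Phi}"

definition WIp :: "'a::euclidean_space set \<Rightarrow> nat \<Rightarrow> ('a \<Rightarrow> 'a) set" where
  "WIp I p = gen_group ({aff_refl a 0 | a. a \<in> I} \<union>
                        {transl ((of_int m * real p) *\<^sub>R a) | a m. a \<in> I})"

definition dot :: "'a::euclidean_space set \<Rightarrow> 'a set \<Rightarrow> ('a \<Rightarrow> 'a) \<Rightarrow> 'a \<Rightarrow> 'a" where
  "dot Phi S w x = w (x + rho Phi S) - rho Phi S"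

definition alcove :: "'a::euclidean_space set \<Rightarrow> 'a set \<Rightarrow> nat \<Rightarrow> 'a set" where
  "alcove Phi S p = {x. \<forall>a\<in>pos_roots Phi S.
       0 < pair (x + rho Phi S) a \<and> pair (x + rho Phi S) a < real p}"

definition alcove_cl :: "'a::euclidean_space set \<Rightarrow> 'a set \<Rightarrow> nat \<Rightarrow> 'a set" where
  "alcove_cl Phi S p = {x. \<forall>a\<in>pos_roots Phi S.
       0 \<le> pair (x + rho Phi S) a \<and> pair (x + rho Phi S) a \<le> real p}"

definition alcove_I :: "'a::euclidean_space set \<Rightarrow> 'a set \<Rightarrow> 'a set \<Rightarrow> nat \<Rightarrow> 'a set" where
  "alcove_I Phi S I p = {x. \<forall>a\<in>pos_roots Phi S \<inter> zspan I.
       0 < pair (x + rho Phi S) a \<and> pair (x + rho Phi S) a < real p}"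

definition alcove_I_cl :: "'a::euclidean_space set \<Rightarrow> 'a set \<Rightarrow> 'a set \<Rightarrow> nat \<Rightarrow> 'a set" where
  "alcove_I_cl Phi S I p = {x. \<forall>a\<in>pos_roots Phi S \<inter> zspan I.
       0 \<le> pair (x + rho Phi S) a \<and> pair (x + rho Phi S) a \<le> real p}"

definition WIlam :: "'a::euclidean_space set \<Rightarrow> 'a set \<Rightarrow> 'a set \<Rightarrow> nat \<Rightarrow> 'a \<Rightarrow> ('a \<Rightarrow> 'a) set" where
  "WIlam Phi S I p lam = {w \<in> Wp Phi p. dot Phi S w lam \<in> alcove_I_cl Phi S I p}"

text \<open>s is the reflection (for the dot action) in a wall of the closed fundamental alcove:
its fixed hyperplane H meets the closed alcove in a facet (affine hull of H \<inter> Cbar is H).\<close>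
definition wall_refl :: "'a::euclidean_space set \<Rightarrow> 'a set \<Rightarrow> nat \<Rightarrow> ('a \<Rightarrow> 'a) \<Rightarrow> bool" where
  "wall_refl Phi S p s \<longleftrightarrow> (\<exists>a\<in>Phi. \<exists>m::int.
      s = aff_refl a (of_int m * real p) \<and>
      affine hull ({x. pair (x + rho Phi S) a = of_int m * real p} \<inter> alcove_cl Phi S p)
        = {x. pair (x + rho Phi S) a = of_int m * real p})"

end

theory Submission
  imports Defs
begin

text \<open>
  In \<open>\<rho>\<close>-shifted coordinates \<open>y = x + \<rho>\<close> the dot action becomes the ordinary action of
  \<open>W\<^sub>p\<close> by affine reflections \<open>s\<^sub>a\<^sub>,\<^sub>m\<^sub>p\<close>, and (\<open>I\<close>-)alcoves are cut out by the hyperplanes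
  \<open>\<langle>y, a\<^sup>\<or>\<rangle> = m p\<close>. Put \<open>L = \<lambda> + \<rho>\<close>, \<open>y\<^sub>1 = w L\<close> and \<open>y\<^sub>0 = w s L = R y\<^sub>1\<close>, where
  \<open>R = w s w\<^sup>-\<^sup>1 = s\<^sub>\<beta>\<^sub>,\<^sub>j\<^sub>p\<close> is again an affine reflection.

  If \<open>R \<in> W\<^sub>I\<^sub>,\<^sub>p\<close>, its displacements lie in the span of \<open>I\<close>, so \<open>\<pm>\<beta>\<close> is a positive root
  of \<open>\<int>I\<close>; but \<open>\<langle>y\<^sub>0 + y\<^sub>1, \<beta>\<^sup>\<or>\<rangle> = 2 j p\<close>, so \<open>y\<^sub>0\<close> and \<open>y\<^sub>1\<close> cannot both lie in the
  \<open>I\<close>-alcove.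

  Conversely, a wall reflection \<open>s\<close> of the fundamental alcove moves \<open>L\<close> across no hyperplane
  other than its own wall: any other hyperplane misses some point \<open>Z = s Z\<close> of that wall, and
  the segments from \<open>L\<close> and from \<open>s L\<close> to \<open>Z\<close> cross no hyperplane. Transporting by \<open>w\<close>, the
  points \<open>y\<^sub>0\<close> and \<open>y\<^sub>1\<close> lie on the same side of every hyperplane of a root in \<open>\<int>I\<close>,
  unless that hyperplane is the image of the wall, in which case \<open>R\<close> is the reflection in it
  and lies in \<open>W\<^sub>I\<^sub>,\<^sub>p\<close>. As \<open>y\<^sub>1\<close> lies in the closed \<open>I\<close>-alcove, \<open>y\<^sub>0\<close> lies in the open one.
\<close>

section \<open>Coroot pairing and affine reflections\<close>

lemma pair_add: "pair (x + y) a = pair x a + pair y a"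
  by (simp add: pair_def inner_add_left add_divide_distrib)

lemma pair_diff: "pair (x - y) a = pair x a - pair y a"
  by (simp add: pair_def inner_diff_left diff_divide_distrib)

lemma pair_scaleR: "pair (t *\<^sub>R x) a = t * pair x a"
  by (simp add: pair_def)

lemma pair_uminus_right: "pair x (- a) = - pair x a"
  by (simp add: pair_def)

lemma pair_self: "a \<noteq> 0 \<Longrightarrow> pair a a = 2"
  by (simp add: pair_def)

lemma pair_zero [simp]: "pair 0 a = 0"
  by (simp add: pair_def)

lemma pair_sum: "pair (\<Sum>i\<in>F. f i) a = (\<Sum>i\<in>F. pair (f i) a)"
  by (induction F rule: infinite_finite_induct) (auto simp: pair_add)

lemma pair_eq_0_iff: "a \<noteq> 0 \<Longrightarrow> pair x a = 0 \<longleftrightarrow> inner x a = 0"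
  by (simp add: pair_def)

definition root_refl :: "'a::real_inner \<Rightarrow> 'a \<Rightarrow> 'a" where
  "root_refl c x = x - pair x c *\<^sub>R c"

lemma aff_refl_eq_root_refl: "aff_refl c k x = root_refl c x + k *\<^sub>R c"
  by (simp add: aff_refl_def root_refl_def)

lemma aff_refl_eq_diff: "aff_refl c k x = x - (pair x c - k) *\<^sub>R c"
  by (simp add: aff_refl_def algebra_simps)

lemma root_refl_add: "root_refl c (u + v) = root_refl c u + root_refl c v"
  by (simp add: root_refl_def pair_add algebra_simps)

lemma root_refl_scaleR: "root_refl c (t *\<^sub>R u) = t *\<^sub>R root_refl c u"
  by (simp add: root_refl_def pair_scaleR algebra_simps)

lemma root_refl_diff: "root_refl c (u - v) = root_refl c u - root_refl c v"
  by (simp add: root_refl_def pair_diff algebra_simps)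

lemma root_refl_sum: "root_refl c (\<Sum>i\<in>F. f i) = (\<Sum>i\<in>F. root_refl c (f i))"
  by (induction F rule: infinite_finite_induct) (simp_all add: root_refl_add root_refl_def[of c 0])

lemma root_refl_self: "c \<noteq> 0 \<Longrightarrow> root_refl c c = - c"
  by (simp add: root_refl_def pair_self scaleR_2)

lemma inner_root_refl: "inner (root_refl c x) y = inner x (root_refl c y)"
  by (simp add: root_refl_def pair_def inner_diff_left inner_diff_right inner_commute)

lemma inner_root_refl_self: "c \<noteq> 0 \<Longrightarrow> inner (root_refl c a) (root_refl c a) = inner a a"
  by (simp add: root_refl_def pair_def inner_diff_left inner_diff_right inner_commute
      field_simps power2_eq_square)

lemma pair_root_refl: "c \<noteq> 0 \<Longrightarrow> pair (root_refl c x) a = pair x (root_refl c a)"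
  unfolding pair_def by (simp add: inner_root_refl_self inner_root_refl[of c x])

lemma pair_aff_refl: "pair (aff_refl b K u) a = pair u a - (pair u b - K) * pair b a"
  by (simp add: aff_refl_eq_diff pair_diff pair_scaleR)

lemma pair_aff_refl_self: "c \<noteq> 0 \<Longrightarrow> pair (aff_refl c K x) c = 2 * K - pair x c"
  by (simp add: pair_aff_refl pair_self algebra_simps)

lemma pair_aff_refl_eq_root_refl:
  "c \<noteq> 0 \<Longrightarrow> pair (aff_refl c K x) a = pair x (root_refl c a) + K * pair c a"
  by (simp add: aff_refl_eq_root_refl pair_add pair_scaleR pair_root_refl)

lemma aff_refl_involution: "c \<noteq> 0 \<Longrightarrow> aff_refl c K (aff_refl c K x) = x"
  by (simp add: aff_refl_eq_diff[of c K "aff_refl c K x"] pair_aff_refl_self)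
    (simp add: aff_refl_eq_diff algebra_simps)

lemma root_refl_involution: "c \<noteq> 0 \<Longrightarrow> root_refl c (root_refl c x) = x"
  using aff_refl_involution[of c 0 x] by (simp add: aff_refl_eq_root_refl)

lemma root_refl_conj: "c \<noteq> 0 \<Longrightarrow> root_refl c (root_refl b (root_refl c x)) = root_refl (root_refl c b) x"
  by (simp add: root_refl_def[of b] root_refl_diff root_refl_scaleR root_refl_involution pair_root_refl)
    (simp add: root_refl_def)

lemma aff_refl_conj:
  assumes "c \<noteq> 0"
  shows "aff_refl c K (aff_refl b K' (aff_refl c K x)) = aff_refl (root_refl c b) (K' - K * pair c b) x"
proof -
  have "aff_refl c K (aff_refl b K' (aff_refl c K x))
      = root_refl c (root_refl b (root_refl c x)) + K *\<^sub>R root_refl c (root_refl b c)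
        + K' *\<^sub>R root_refl c b + K *\<^sub>R c"
    by (simp add: aff_refl_eq_root_refl root_refl_add root_refl_scaleR algebra_simps)
  also have "root_refl c (root_refl b c) = - c - pair c b *\<^sub>R root_refl c b"
    using assms by (simp add: root_refl_def[of b c] root_refl_diff root_refl_scaleR root_refl_self)
  finally show ?thesis
    using assms by (simp add: root_refl_conj aff_refl_eq_root_refl algebra_simps)
qed

lemma parallel_if_orthogonal_complement_subset:
  fixes b c :: "'a::real_inner"
  assumes "c \<noteq> 0" and "\<And>u. inner u c = 0 \<Longrightarrow> inner u b = 0"
  shows "b = (inner b c / inner c c) *\<^sub>R c"
proof -
  define u where "u = b - (inner b c / inner c c) *\<^sub>R c"
  have uc: "inner u c = 0"
    using assms(1) by (simp add: u_def inner_diff_left)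
  have "inner u u = inner u b - (inner b c / inner c c) * inner u c"
    by (simp add: u_def inner_diff_right)
  then have "inner u u = 0"
    using uc assms(2)[OF uc] by simp
  then show ?thesis
    by (simp add: u_def)
qed

lemma parallel_if_hyperplane_subset:
  fixes b c :: "'a::real_inner"
  assumes "c \<noteq> 0" and "{x. pair x c = C} \<subseteq> {x. pair x b = B}"
  shows "\<exists>t. b = t *\<^sub>R c"
proof -
  define x0 where "x0 = (C / 2) *\<^sub>R c"
  have x0: "pair x0 c = C"
    using assms(1) by (simp add: x0_def pair_scaleR pair_self)
  have "inner u b = 0" if "inner u c = 0" for u
  proof -
    have "pair (x0 + u) c = C"
      using x0 that assms(1) by (simp add: pair_add pair_eq_0_iff)
    then have "pair (x0 + u) b = B" and "pair x0 b = B"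
      using assms(2) x0 by blast+
    then have "pair u b = 0"
      by (simp add: pair_add)
    then show ?thesis
      by (cases "b = 0") (simp_all add: pair_eq_0_iff)
  qed
  then show ?thesis
    using parallel_if_orthogonal_complement_subset[OF assms(1)] by blast
qed

lemma parallel_if_aff_refl_negates:
  fixes a \<beta> :: "'a::real_inner"
  assumes "\<beta> \<noteq> 0" "a \<noteq> 0" and neg: "\<And>u. pair (aff_refl \<beta> K u) a - M = - (pair u a - M)"
  shows "\<exists>t. a = t *\<^sub>R \<beta>"
proof -
  have lin: "2 * (pair u a - M) = (pair u \<beta> - K) * pair \<beta> a" for u
    using neg[of u] by (simp add: pair_aff_refl algebra_simps)
  have "inner u a = 0" if "inner u \<beta> = 0" for u
  proof -
    have "pair u \<beta> = 0"
      using that assms(1) by (simp add: pair_eq_0_iff)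
    then have "2 * (pair u a - M) = 2 * (pair 0 a - M)"
      using lin[of u] lin[of 0] by simp
    then show ?thesis
      using assms(2) by (simp add: pair_eq_0_iff)
  qed
  then show ?thesis
    using parallel_if_orthogonal_complement_subset[OF assms(1)] by blast
qed

lemma int_multiple_not_in_open_interval:
  "\<not> (0 < of_int m * real p \<and> of_int m * real p < real p)"
proof
  assume m: "0 < of_int m * real p \<and> of_int m * real p < real p"
  then have "m \<ge> 1" and "p > 0"
    by (auto simp: zero_less_mult_iff)
  then have "of_int m * real p \<ge> 1 * real p"
    by (intro mult_right_mono) auto
  then show False
    using m by linarith
qed

lemma zspan_0: "0 \<in> zspan B"
  unfolding zspan_def by (intro CollectI exI[of _ "{}"]) auto

lemma sum_if_mem_scaleR:
  assumes "finite F" "G \<subseteq> F"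
  shows "(\<Sum>b\<in>F. of_int (if b \<in> G then c b else 0) *\<^sub>R (b::'a::real_vector))
       = (\<Sum>b\<in>G. of_int (c b) *\<^sub>R b)"
proof -
  have "(\<Sum>b\<in>F. of_int (if b \<in> G then c b else 0) *\<^sub>R b)
      = (\<Sum>b\<in>F. if b \<in> G then of_int (c b) *\<^sub>R b else 0)"
    by (rule sum.cong) auto
  also have "\<dots> = (\<Sum>b\<in>F \<inter> G. of_int (c b) *\<^sub>R b)"
    using assms(1) by (simp add: sum.inter_restrict)
  finally show ?thesis
    using assms(2) by (simp add: Int_absorb1)
qed

lemma zspan_add:
  assumes "x \<in> zspan B" "y \<in> zspan B"
  shows "x + y \<in> zspan B"
proof -
  obtain F1 c1 where 1: "finite F1" "F1 \<subseteq> B" "x = (\<Sum>b\<in>F1. of_int (c1 b) *\<^sub>R b)"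
    using assms(1) unfolding zspan_def by auto
  obtain F2 c2 where 2: "finite F2" "F2 \<subseteq> B" "y = (\<Sum>b\<in>F2. of_int (c2 b) *\<^sub>R b)"
    using assms(2) unfolding zspan_def by auto
  define c where "c b = (if b \<in> F1 then c1 b else 0) + (if b \<in> F2 then c2 b else 0)" for b
  have "(\<Sum>b\<in>F1 \<union> F2. of_int (c b) *\<^sub>R b) =
      (\<Sum>b\<in>F1 \<union> F2. of_int (if b \<in> F1 then c1 b else 0) *\<^sub>R b) +
      (\<Sum>b\<in>F1 \<union> F2. of_int (if b \<in> F2 then c2 b else 0) *\<^sub>R b)"
    unfolding sum.distrib[symmetric] by (rule sum.cong) (simp_all add: c_def scaleR_add_left)
  also have "\<dots> = x + y"
    using 1 2 by (simp add: sum_if_mem_scaleR)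
  finally show ?thesis
    unfolding zspan_def using 1 2 by (intro CollectI exI[of _ "F1 \<union> F2"] exI[of _ c]) auto
qed

lemma zspan_scaleR:
  assumes "x \<in> zspan B" "k \<in> \<int>"
  shows "k *\<^sub>R x \<in> zspan B"
proof -
  obtain F c where F: "finite F" "F \<subseteq> B" "x = (\<Sum>b\<in>F. of_int (c b) *\<^sub>R b)"
    using assms(1) unfolding zspan_def by auto
  obtain m where m: "k = of_int m"
    using assms(2) Ints_cases by blast
  have "k *\<^sub>R x = (\<Sum>b\<in>F. of_int (m * c b) *\<^sub>R b)"
    by (simp add: F(3) m scaleR_sum_right)
  then show ?thesis
    unfolding zspan_def using F by (intro CollectI exI[of _ F] exI[of _ "\<lambda>b. m * c b"]) simp
qed

lemma zspan_sum: "(\<And>i. i \<in> F \<Longrightarrow> f i \<in> zspan B) \<Longrightarrow> (\<Sum>i\<in>F. f i) \<in> zspan B"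
  by (induction F rule: infinite_finite_induct) (auto simp: zspan_0 zspan_add)

lemma zspan_subset_span: "zspan B \<subseteq> span B"
  unfolding zspan_def by (auto intro!: span_sum span_scale intro: span_base)

lemma coordinates_unique:
  assumes "independent S" "finite S"
    and "(\<Sum>s\<in>S. u s *\<^sub>R s) = (\<Sum>s\<in>S. v s *\<^sub>R s)" "s \<in> S"
  shows "u s = v s"
proof -
  have "(\<Sum>s\<in>S. (u s - v s) *\<^sub>R s) = 0"
    using assms(3) by (simp add: scaleR_diff_left sum_subtractf)
  then show ?thesis
    using independentD[OF assms(1,2) order_refl, of "\<lambda>s. u s - v s"] assms(4) by simp
qed

lemma sum_delta_scaleR:
  fixes a :: "'a::real_vector" and k :: real
  assumes "finite S" "a \<in> S"
  shows "(\<Sum>s\<in>S. (if s = a then k else 0) *\<^sub>R s) = k *\<^sub>R a"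
proof -
  have "(\<Sum>s\<in>S. (if s = a then k else 0) *\<^sub>R s) = (\<Sum>s\<in>S. if s = a then k *\<^sub>R a else 0)"
    by (rule sum.cong) auto
  then show ?thesis
    using assms by simp
qed

lemma exists_acute_summand:
  fixes b :: "'a::real_inner"
  assumes "b = (\<Sum>s\<in>S. of_int (c s) *\<^sub>R s)" "\<forall>s\<in>S. 0 \<le> c s" "b \<noteq> 0"
  shows "\<exists>a\<in>S. 0 < c a \<and> 0 < inner a b"
proof (rule ccontr)
  assume "\<not> ?thesis"
  then have "\<forall>s\<in>S. of_int (c s) * inner s b \<le> 0"
    using assms(2) by (auto simp: mult_le_0_iff)
  then have "inner b b \<le> 0"
    by (subst (1) assms(1)) (simp add: inner_sum_left sum_nonpos)
  then show False
    using assms(3) inner_gt_zero_iff[of b] by linarith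
qed

lemma gen_group_comp: "g \<in> gen_group G \<Longrightarrow> h \<in> gen_group G \<Longrightarrow> g \<circ> h \<in> gen_group G"
  by (induction g rule: gen_group.induct) (auto simp: comp_assoc intro: gen_group.intros)

lemma gen_group_base: "g \<in> G \<Longrightarrow> g \<in> gen_group G"
  using gen_group.gen_step[OF _ gen_group.gen_id, of g G] by simp

lemma WIp_displacement_in_span:
  assumes "g \<in> WIp I p"
  shows "g y - y \<in> span I"
  using assms unfolding WIp_def
proof (induction g arbitrary: y rule: gen_group.induct)
  case gen_id
  then show ?case by (simp add: span_zero)
next
  case (gen_step r g)
  have "r x - x \<in> span I" for x
    using gen_step(1)
    by (auto simp: aff_refl_def transl_def simp flip: scaleR_minus_left intro!: span_scale[OF span_base])
  then have "r (g y) - g y + (g y - y) \<in> span I"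
    using gen_step(3) by (rule span_add)
  then show ?case
    by simp
qed

lemma transl_WIp:
  assumes "x \<in> zspan I"
  shows "transl ((of_int j * real p) *\<^sub>R x) \<in> WIp I p"
proof -
  obtain F c where F: "finite F" "F \<subseteq> I" "x = (\<Sum>b\<in>F. of_int (c b) *\<^sub>R b)"
    using assms unfolding zspan_def by auto
  have "transl (\<Sum>b\<in>G. (of_int (j * c b) * real p) *\<^sub>R b) \<in> WIp I p" if "finite G" "G \<subseteq> I" for G
    using that
  proof (induction G rule: finite_induct)
    case empty
    have "transl (\<Sum>b\<in>{}. (of_int (j * c b) * real p) *\<^sub>R b) = id"
      by (auto simp: transl_def)
    then show ?case
      unfolding WIp_def using gen_group.gen_id by metis
  next
    case (insert b G)
    have "transl (\<Sum>b\<in>insert b G. (of_int (j * c b) * real p) *\<^sub>R b)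
        = transl ((of_int (j * c b) * real p) *\<^sub>R b) \<circ> transl (\<Sum>b\<in>G. (of_int (j * c b) * real p) *\<^sub>R b)"
      using insert(1,2) by (auto simp: transl_def algebra_simps)
    moreover have "transl ((of_int (j * c b) * real p) *\<^sub>R b) \<in> WIp I p"
      unfolding WIp_def using insert(4) by (intro gen_group_base) blast
    moreover have "transl (\<Sum>b\<in>G. (of_int (j * c b) * real p) *\<^sub>R b) \<in> WIp I p"
      using insert(3,4) by simp
    ultimately show ?case
      unfolding WIp_def by (simp only: gen_group_comp)
  qed
  moreover have "(of_int j * real p) *\<^sub>R x = (\<Sum>b\<in>F. (of_int (j * c b) * real p) *\<^sub>R b)"
    unfolding F(3) scaleR_sum_right by (rule sum.cong) (auto simp: algebra_simps)
  ultimately show ?thesis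
    using F by simp
qed

definition open_slabs :: "'a::real_inner set \<Rightarrow> nat \<Rightarrow> 'a set" where
  "open_slabs A p = {y. \<forall>a\<in>A. 0 < pair y a \<and> pair y a < real p}"

definition closed_slabs :: "'a::real_inner set \<Rightarrow> nat \<Rightarrow> 'a set" where
  "closed_slabs A p = {y. \<forall>a\<in>A. 0 \<le> pair y a \<and> pair y a \<le> real p}"

lemma open_slabs_segment:
  assumes L: "L \<in> open_slabs A p" and Z: "Z \<in> closed_slabs A p" and t: "0 \<le> t" "t < 1"
  shows "(1 - t) *\<^sub>R L + t *\<^sub>R Z \<in> open_slabs A p"
  unfolding open_slabs_def
proof (intro CollectI ballI conjI)
  fix a assume a: "a \<in> A"
  have L1: "0 < pair L a" "pair L a < real p" and Z1: "0 \<le> pair Z a" "pair Z a \<le> real p"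
    using L Z a by (auto simp: open_slabs_def closed_slabs_def)
  have e: "pair ((1 - t) *\<^sub>R L + t *\<^sub>R Z) a = (1 - t) * pair L a + t * pair Z a"
    by (simp add: pair_add pair_scaleR)
  have "0 < (1 - t) * pair L a" "0 \<le> t * pair Z a"
    using t L1 Z1 by simp_all
  then show "0 < pair ((1 - t) *\<^sub>R L + t *\<^sub>R Z) a"
    unfolding e by simp
  have "(1 - t) * pair L a < (1 - t) * real p" "t * pair Z a \<le> t * real p"
    using t L1 Z1 by (simp_all add: mult_left_mono)
  then show "pair ((1 - t) *\<^sub>R L + t *\<^sub>R Z) a < real p"
    unfolding e by (simp add: algebra_simps)
qed

lemma open_slabs_if_same_side:
  assumes "y \<in> closed_slabs A p"
    and "\<And>a. a \<in> A \<Longrightarrow> 0 < pair y' a * pair y a \<and> 0 < (pair y' a - real p) * (pair y a - real p)"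
  shows "y' \<in> open_slabs A p"
  using assms unfolding open_slabs_def closed_slabs_def
  by (fastforce simp: zero_less_mult_iff)

lemma mem_alcove_iff: "x \<in> alcove Phi S p \<longleftrightarrow> x + rho Phi S \<in> open_slabs (pos_roots Phi S) p"
  by (simp add: alcove_def open_slabs_def)

lemma mem_alcove_cl_iff: "x \<in> alcove_cl Phi S p \<longleftrightarrow> x + rho Phi S \<in> closed_slabs (pos_roots Phi S) p"
  by (simp add: alcove_cl_def closed_slabs_def)

lemma mem_alcove_I_iff:
  "x \<in> alcove_I Phi S I p \<longleftrightarrow> x + rho Phi S \<in> open_slabs (pos_roots Phi S \<inter> zspan I) p"
  by (simp add: alcove_I_def open_slabs_def)

lemma mem_alcove_I_cl_iff:
  "x \<in> alcove_I_cl Phi S I p \<longleftrightarrow> x + rho Phi S \<in> closed_slabs (pos_roots Phi S \<inter> zspan I) p"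
  by (simp add: alcove_I_cl_def closed_slabs_def)

section \<open>Root data\<close>

locale based_root_datum =
  fixes X Phi S :: "'a::euclidean_space set"
  assumes root_datum: "root_datum X Phi" and base: "is_base Phi S"
begin

abbreviation pos :: "'a set" where
  "pos \<equiv> pos_roots Phi S"

lemma X_zspan: obtains B where "X = zspan B"
  using root_datum unfolding root_datum_def by blast

lemma finite_roots: "finite Phi"
  and roots_subset_X: "Phi \<subseteq> X"
  and root_nonzero: "a \<in> Phi \<Longrightarrow> a \<noteq> 0"
  and root_refl_root: "a \<in> Phi \<Longrightarrow> b \<in> Phi \<Longrightarrow> root_refl a b \<in> Phi"
  and root_multiple: "a \<in> Phi \<Longrightarrow> t *\<^sub>R a \<in> Phi \<Longrightarrow> t = 1 \<or> t = -1"
  and pair_X_root_Ints: "x \<in> X \<Longrightarrow> a \<in> Phi \<Longrightarrow> pair x a \<in> \<int>"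
  using root_datum unfolding root_datum_def root_refl_def by blast+

lemma uminus_root: "a \<in> Phi \<Longrightarrow> - a \<in> Phi"
  using root_refl_root[of a a] root_nonzero[of a] by (simp add: root_refl_self)

lemma parallel_roots: "a \<in> Phi \<Longrightarrow> b \<in> Phi \<Longrightarrow> a = t *\<^sub>R b \<Longrightarrow> a = b \<or> a = - b"
  using root_multiple[of b t] by auto

lemma pair_roots_Ints: "a \<in> Phi \<Longrightarrow> b \<in> Phi \<Longrightarrow> pair a b \<in> \<int>"
  using pair_X_root_Ints roots_subset_X by blast

lemma X_add: "x \<in> X \<Longrightarrow> y \<in> X \<Longrightarrow> x + y \<in> X"
  by (metis X_zspan zspan_add)

lemma X_scaleR: "x \<in> X \<Longrightarrow> k \<in> \<int> \<Longrightarrow> k *\<^sub>R x \<in> X"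
  by (metis X_zspan zspan_scaleR)

lemma X_sum: "(\<And>i. i \<in> F \<Longrightarrow> f i \<in> X) \<Longrightarrow> (\<Sum>i\<in>F. f i) \<in> X"
  by (metis X_zspan zspan_sum)

lemma simple_roots_subset: "S \<subseteq> Phi"
  and independent_simple_roots: "independent S"
  and roots_pos_or_neg: "Phi \<subseteq> nnzspan S \<union> uminus ` nnzspan S"
  using base unfolding is_base_def by blast+

lemma finite_simple_roots: "finite S"
  using simple_roots_subset finite_roots by (rule finite_subset)

lemma simple_coordinates_unique:
  "(\<Sum>s\<in>S. u s *\<^sub>R s) = (\<Sum>s\<in>S. v s *\<^sub>R s) \<Longrightarrow> s \<in> S \<Longrightarrow> u s = v s"
  using coordinates_unique[OF independent_simple_roots finite_simple_roots] .

lemma nnzspan_coordinates: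
  assumes "x \<in> nnzspan S"
  obtains c :: "'a \<Rightarrow> int" where "\<forall>s\<in>S. 0 \<le> c s" "x = (\<Sum>s\<in>S. of_int (c s) *\<^sub>R s)"
proof -
  obtain F c where F: "finite F" "F \<subseteq> S" "\<forall>b\<in>F. c b \<ge> (0::int)" "x = (\<Sum>b\<in>F. of_int (c b) *\<^sub>R b)"
    using assms unfolding nnzspan_def by auto
  show ?thesis
    by (rule that[of "\<lambda>b. if b \<in> F then c b else 0"])
      (use F finite_simple_roots in \<open>auto simp: sum_if_mem_scaleR\<close>)
qed

lemma pos_subset_roots: "pos \<subseteq> Phi"
  by (auto simp: pos_roots_def)

lemma root_pos_or_neg: "a \<in> Phi \<Longrightarrow> a \<in> pos \<or> - a \<in> pos"
  using roots_pos_or_neg uminus_root[of a] unfolding pos_roots_def by auto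

lemma pos_root_coordinates:
  assumes "a \<in> pos"
  obtains c :: "'a \<Rightarrow> int" where "\<forall>s\<in>S. 0 \<le> c s" "a = (\<Sum>s\<in>S. of_int (c s) *\<^sub>R s)"
  using assms nnzspan_coordinates unfolding pos_roots_def by blast

lemma neg_root_coordinates:
  assumes "a \<in> Phi" "a \<notin> pos"
  obtains c :: "'a \<Rightarrow> int" where "\<forall>s\<in>S. c s \<le> 0" "a = (\<Sum>s\<in>S. of_int (c s) *\<^sub>R s)"
proof -
  obtain c where c: "\<forall>s\<in>S. 0 \<le> c s" "- a = (\<Sum>s\<in>S. of_int (c s) *\<^sub>R s)"
    using root_pos_or_neg[OF assms(1)] assms(2) pos_root_coordinates by blast
  have "a = (\<Sum>s\<in>S. of_int (- c s) *\<^sub>R s)"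
    using arg_cong[OF c(2), of uminus] by (simp add: sum_negf[symmetric])
  then show ?thesis
    using that[of "\<lambda>s. - c s"] c(1) by auto
qed

lemma simple_roots_pos: "S \<subseteq> pos"
proof
  fix b assume b: "b \<in> S"
  have "b \<in> nnzspan S"
    unfolding nnzspan_def using b by (intro CollectI exI[of _ "{b}"] exI[of _ "\<lambda>_. 1::int"]) auto
  then show "b \<in> pos"
    using b simple_roots_subset unfolding pos_roots_def by auto
qed

lemma roots_subset_span_simple: "Phi \<subseteq> span S"
proof
  fix a assume a: "a \<in> Phi"
  have "a \<in> span S" if "a \<in> pos" for a
    using pos_root_coordinates[OF that] by (auto intro!: span_sum span_scale intro: span_base)
  then show "a \<in> span S"
    using root_pos_or_neg[OF a] span_neg[of "- a" S] by auto
qed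

lemma root_refl_simple_coordinates:
  assumes "a \<in> S" "b = (\<Sum>s\<in>S. of_int (c s) *\<^sub>R s)" "pair b a = of_int j"
  shows "root_refl a b = (\<Sum>s\<in>S. of_int (c s - (if s = a then j else 0)) *\<^sub>R s)"
proof -
  have "of_int (c s - (if s = a then j else 0)) *\<^sub>R s
      = of_int (c s) *\<^sub>R s - (if s = a then of_int j else 0) *\<^sub>R s" for s
    by (simp add: scaleR_diff_left)
  then have "(\<Sum>s\<in>S. of_int (c s - (if s = a then j else 0)) *\<^sub>R s)
      = (\<Sum>s\<in>S. of_int (c s) *\<^sub>R s) - (\<Sum>s\<in>S. (if s = a then of_int j else 0) *\<^sub>R s)"
    by (simp add: sum_subtractf)
  then show ?thesis
    using assms finite_simple_roots by (simp add: sum_delta_scaleR root_refl_def)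
qed

lemma root_refl_simple_height:
  assumes "a \<in> S" "b = (\<Sum>s\<in>S. of_int (c s) *\<^sub>R s)" "pair b a = of_int j"
    and "root_refl a b = (\<Sum>s\<in>S. of_int (d s) *\<^sub>R s)"
  shows "(\<Sum>s\<in>S. d s) = (\<Sum>s\<in>S. c s) - j"
proof -
  have "d s = c s - (if s = a then j else 0)" if "s \<in> S" for s
  proof -
    have "real_of_int (d s) = of_int (c s - (if s = a then j else 0))"
      using simple_coordinates_unique[of "\<lambda>s. of_int (d s)" "\<lambda>s. of_int (c s - (if s = a then j else 0))",
          OF _ that] assms(4) root_refl_simple_coordinates[OF assms(1-3)] by simp
    then show ?thesis
      by (simp only: of_int_eq_iff)
  qed
  then have "(\<Sum>s\<in>S. d s) = (\<Sum>s\<in>S. c s - (if s = a then j else 0))"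
    by (rule sum.cong[OF refl])
  then show ?thesis
    using assms(1) finite_simple_roots by (simp add: sum_subtractf)
qed

text \<open>A positive root \<open>a \<noteq> b\<close> has a positive coordinate at some simple root \<open>t \<noteq> b\<close>, and
  \<open>root_refl b\<close> leaves that coordinate unchanged.\<close>
lemma root_refl_simple_pos:
  assumes b: "b \<in> S" and a: "a \<in> pos" and "a \<noteq> b"
  shows "root_refl b a \<in> pos" "root_refl b a \<noteq> b"
proof -
  obtain c where c: "\<forall>s\<in>S. 0 \<le> c s" "a = (\<Sum>s\<in>S. of_int (c s) *\<^sub>R s)"
    using pos_root_coordinates[OF a] .
  have roots: "a \<in> Phi" "b \<in> Phi"
    using a b pos_subset_roots simple_roots_subset by auto
  have "\<exists>t\<in>S. t \<noteq> b \<and> c t > 0"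
  proof (rule ccontr)
    assume "\<not> ?thesis"
    then have "\<forall>t\<in>S. t \<noteq> b \<longrightarrow> c t = 0"
      using c(1) by force
    then have a_eq: "a = of_int (c b) *\<^sub>R b"
      unfolding c(2) using b finite_simple_roots
      by (subst sum_delta_scaleR[symmetric]) (auto intro: sum.cong)
    then have "c b = 1"
      using root_multiple[of b "of_int (c b)"] roots c(1) b by fastforce
    then show False
      using a_eq \<open>a \<noteq> b\<close> by simp
  qed
  then obtain t where t: "t \<in> S" "t \<noteq> b" "c t > 0"
    by blast
  obtain j where j: "pair a b = of_int j"
    using pair_roots_Ints[OF roots] Ints_cases by blast
  note refl_a = root_refl_simple_coordinates[OF b c(2) j]
  show "root_refl b a \<in> pos"
  proof (rule ccontr)
    assume "root_refl b a \<notin> pos"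
    then obtain d where d: "\<forall>s\<in>S. d s \<le> 0" "root_refl b a = (\<Sum>s\<in>S. of_int (d s) *\<^sub>R s)"
      using neg_root_coordinates[OF root_refl_root[OF roots(2,1)]] by blast
    have "real_of_int (c t - (if t = b then j else 0)) = of_int (d t)"
      using simple_coordinates_unique[of "\<lambda>s. of_int (c s - (if s = b then j else 0))"
          "\<lambda>s. of_int (d s)", OF _ t(1)] refl_a d(2) by simp
    then show False
      using t d(1) by auto
  qed
  show "root_refl b a \<noteq> b"
  proof
    assume "root_refl b a = b"
    then have "(\<Sum>s\<in>S. of_int (c s - (if s = b then j else 0)) *\<^sub>R s)
        = (\<Sum>s\<in>S. (if s = b then 1 else 0) *\<^sub>R s)"
      using refl_a b finite_simple_roots by (simp add: sum_delta_scaleR)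
    then have "real_of_int (c t - (if t = b then j else 0)) = (if t = b then 1 else 0)"
      by (rule simple_coordinates_unique[OF _ t(1)])
    then show False
      using t by simp
  qed
qed

lemma pair_sum_pos_simple:
  assumes b: "b \<in> S"
  shows "pair (\<Sum>a\<in>pos. a) b = 2"
proof -
  have b_pos: "b \<in> pos" and b_nz: "b \<noteq> 0"
    using b simple_roots_pos simple_roots_subset root_nonzero by auto
  define Q where "Q = pos - {b}"
  have fin: "finite Q"
    using finite_roots pos_subset_roots finite_subset unfolding Q_def by blast
  have "root_refl b ` Q \<subseteq> Q"
    using root_refl_simple_pos[OF b] by (auto simp: Q_def)
  moreover have inj: "inj_on (root_refl b) Q"
    by (rule inj_on_inverseI[where g = "root_refl b"]) (simp add: root_refl_involution[OF b_nz])
  ultimately have "root_refl b ` Q = Q"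
    using endo_inj_surj[OF fin] by blast
  then have "(\<Sum>a\<in>Q. root_refl b a) = (\<Sum>a\<in>Q. a)"
    using sum.reindex[OF inj, of id] by simp
  then have "root_refl b (\<Sum>a\<in>pos. a) = (\<Sum>a\<in>pos. a) - 2 *\<^sub>R b"
    using fin b_pos b_nz unfolding root_refl_sum
    by (simp add: Q_def sum.remove[of pos b] root_refl_self scaleR_2 finite_Diff2)
  then have "pair (\<Sum>a\<in>pos. a) b *\<^sub>R b = 2 *\<^sub>R b"
    by (simp add: root_refl_def)
  then show ?thesis
    using b_nz by (simp add: scaleR_cancel_right)
qed

lemma pair_rho_simple: "b \<in> S \<Longrightarrow> pair (rho Phi S) b = 1"
  by (simp add: rho_def pair_scaleR pair_sum_pos_simple)

text \<open>With fundamental weights \<open>\<omega>\<^sub>b\<close> in \<open>X\<close>, the weight \<open>\<Sum>\<^sub>b \<omega>\<^sub>b \<in> X\<close> has the same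
  pairings with all roots as \<open>\<rho>\<close>, since both pair to 1 with every simple root.\<close>
lemma pair_rho_Ints:
  assumes sc: "sc_derived X S" and a: "a \<in> Phi"
  shows "pair (rho Phi S) a \<in> \<int>"
proof -
  obtain \<omega> where \<omega>: "\<And>b. b \<in> S \<Longrightarrow> \<omega> b \<in> X \<and> (\<forall>b'\<in>S. pair (\<omega> b) b' = (if b' = b then 1 else 0))"
    using bchoice[OF sc[unfolded sc_derived_def Bex_def]] by blast
  define w where "w = (\<Sum>b\<in>S. \<omega> b)"
  have "w \<in> X"
    unfolding w_def using \<omega> by (intro X_sum) blast
  have "pair w b = 1" if b: "b \<in> S" for b
  proof -
    have "pair w b = (\<Sum>b'\<in>S. if b = b' then 1 else 0)"
      unfolding w_def pair_sum by (rule sum.cong) (use \<omega> b in auto)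
    then show ?thesis
      using b finite_simple_roots by simp
  qed
  then have "orthogonal (rho Phi S - w) b" if "b \<in> S" for b
    using that pair_rho_simple simple_roots_subset root_nonzero
    by (auto simp: pair_diff orthogonal_def pair_eq_0_iff[symmetric])
  then have "orthogonal (rho Phi S - w) a"
    using roots_subset_span_simple a orthogonal_to_span by blast
  then have "pair (rho Phi S) a = pair w a"
    using root_nonzero[OF a] by (simp add: orthogonal_def pair_diff pair_eq_0_iff[symmetric])
  then show ?thesis
    using pair_X_root_Ints[OF \<open>w \<in> X\<close> a] by simp
qed

end

section \<open>The affine Weyl group\<close>

lemma Wp_induct [consumes 1, case_names id step]:
  assumes "g \<in> Wp Phi p"
    and "P id"
    and "\<And>a m g. a \<in> Phi \<Longrightarrow> g \<in> Wp Phi p \<Longrightarrow> P g \<Longrightarrow> P (aff_refl a (of_int m * real p) \<circ> g)"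
  shows "P g"
  using assms(1) unfolding Wp_def
proof (induction g rule: gen_group.induct)
  case gen_id
  show ?case using assms(2) .
next
  case (gen_step r g)
  then show ?case
    using assms(3) unfolding Wp_def by blast
qed

lemma Wp_comp: "g \<in> Wp Phi p \<Longrightarrow> h \<in> Wp Phi p \<Longrightarrow> g \<circ> h \<in> Wp Phi p"
  unfolding Wp_def by (rule gen_group_comp)

context based_root_datum
begin

lemma Wp_bij: "g \<in> Wp Phi p \<Longrightarrow> bij g"
proof (induction rule: Wp_induct)
  case id
  show ?case by (rule bij_id)
next
  case (step a m g)
  have "bij (aff_refl a (of_int m * real p))"
    using root_nonzero[OF step(1)]
    by (intro o_bij[of "aff_refl a (of_int m * real p)"]) (auto simp: aff_refl_involution)
  then show ?case
    using step(3) by (rule bij_comp[rotated])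
qed

lemma Wp_pullback_affine_root:
  assumes "g \<in> Wp Phi p" "a \<in> Phi"
  shows "\<exists>b\<in>Phi. \<exists>n::int. \<forall>x. pair (g x) a - of_int m * real p = pair x b - of_int n * real p"
  using assms
proof (induction arbitrary: a m rule: Wp_induct)
  case id
  then show ?case by auto
next
  case (step c k g)
  obtain i where i: "pair c a = of_int i"
    using pair_roots_Ints[OF step(1) step.prems] Ints_cases by blast
  obtain b n where b: "b \<in> Phi"
    and pull: "\<forall>x. pair (g x) (root_refl c a) - of_int (m - k * i) * real p = pair x b - of_int n * real p"
    using step.IH[OF root_refl_root[OF step(1) step.prems]] by blast
  have "pair ((aff_refl c (of_int k * real p) \<circ> g) x) a - of_int m * real p
      = pair (g x) (root_refl c a) - of_int (m - k * i) * real p" for x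
    using pair_aff_refl_eq_root_refl[OF root_nonzero[OF step(1)]] by (simp add: i algebra_simps)
  then show ?case
    using b pull by auto
qed

lemma Wp_conj_aff_refl:
  assumes "g \<in> Wp Phi p" "c \<in> Phi"
  shows "\<exists>\<beta>\<in>Phi. \<exists>j::int. g \<circ> aff_refl c (of_int k * real p) = aff_refl \<beta> (of_int j * real p) \<circ> g"
  using assms(1)
proof (induction rule: Wp_induct)
  case id
  then show ?case using assms(2) by auto
next
  case (step d l g)
  obtain \<beta> j where \<beta>: "\<beta> \<in> Phi"
    and conj: "g \<circ> aff_refl c (of_int k * real p) = aff_refl \<beta> (of_int j * real p) \<circ> g"
    using step.IH by blast
  obtain i where i: "pair d \<beta> = of_int i"
    using pair_roots_Ints[OF step(1) \<beta>] Ints_cases by blast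
  have d_nz: "d \<noteq> 0"
    using root_nonzero[OF step(1)] .
  let ?r = "aff_refl d (of_int l * real p)"
  have "(?r \<circ> g \<circ> aff_refl c (of_int k * real p)) x
      = (aff_refl (root_refl d \<beta>) (of_int (j - l * i) * real p) \<circ> (?r \<circ> g)) x" for x
  proof -
    have "(?r \<circ> g \<circ> aff_refl c (of_int k * real p)) x = ?r (aff_refl \<beta> (of_int j * real p) (?r (?r (g x))))"
      using fun_cong[OF conj, of x] aff_refl_involution[OF d_nz] by simp
    also have "\<dots> = aff_refl (root_refl d \<beta>) (of_int j * real p - of_int l * real p * pair d \<beta>) (?r (g x))"
      by (rule aff_refl_conj[OF d_nz])
    finally show ?thesis
      by (simp add: i algebra_simps)
  qed
  then show ?case
    using root_refl_root[OF step(1) \<beta>] by blast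
qed

lemma aff_refl_shifted_X:
  assumes "sc_derived X S" "c \<in> Phi" "K \<in> \<int>" "z - rho Phi S \<in> X"
  shows "aff_refl c K z - rho Phi S \<in> X"
proof -
  have "pair z c = pair (z - rho Phi S) c + pair (rho Phi S) c"
    by (simp add: pair_diff)
  then have "K - pair z c \<in> \<int>"
    using pair_X_root_Ints[OF assms(4,2)] pair_rho_Ints[OF assms(1,2)] assms(3) by simp
  then have "(z - rho Phi S) + (K - pair z c) *\<^sub>R c \<in> X"
    using assms(2,4) roots_subset_X by (blast intro: X_add X_scaleR)
  then show ?thesis
    by (simp add: aff_refl_def algebra_simps)
qed

lemma Wp_shifted_X:
  assumes "sc_derived X S" "g \<in> Wp Phi p" "y - rho Phi S \<in> X"
  shows "g y - rho Phi S \<in> X"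
  using assms(2)
proof (induction rule: Wp_induct)
  case id
  then show ?case using assms(3) by simp
next
  case (step a m g)
  then show ?case
    using aff_refl_shifted_X[OF assms(1)] by simp
qed

lemma open_slabs_avoids_hyperplanes:
  assumes y: "y \<in> open_slabs pos p" and a: "a \<in> Phi"
  shows "pair y a \<noteq> of_int m * real p"
  using root_pos_or_neg[OF a]
proof
  assume "a \<in> pos"
  then show ?thesis
    using y int_multiple_not_in_open_interval[of m p] by (auto simp: open_slabs_def)
next
  assume "- a \<in> pos"
  then show ?thesis
    using y int_multiple_not_in_open_interval[of "- m" p] by (auto simp: open_slabs_def pair_uminus_right)
qed

lemma Wp_image_avoids_hyperplanes:
  assumes "g \<in> Wp Phi p" "y \<in> open_slabs pos p" "a \<in> Phi"
  shows "pair (g y) a \<noteq> of_int m * real p"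
proof -
  obtain b n where b: "b \<in> Phi"
    and pull: "\<forall>x. pair (g x) a - of_int m * real p = pair x b - of_int n * real p"
    using Wp_pullback_affine_root[OF assms(1,3)] by blast
  show ?thesis
    using open_slabs_avoids_hyperplanes[OF assms(2) b, of n] pull[rule_format, of y] by auto
qed

text \<open>The half-open segment from \<open>L\<close> to \<open>Z\<close> stays in the open alcove, which meets no
  hyperplane; \<open>t\<close> below is where the functional would vanish on it.\<close>
lemma open_slabs_same_side:
  assumes L: "L \<in> open_slabs pos p" and Z: "Z \<in> closed_slabs pos p"
    and b: "b \<in> Phi" and off: "pair Z b \<noteq> of_int n * real p"
  shows "0 < (pair L b - of_int n * real p) * (pair Z b - of_int n * real p)"
proof (rule ccontr)
  define A where "A = pair L b - of_int n * real p"
  define B where "B = pair Z b - of_int n * real p"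
  assume "\<not> ?thesis"
  then have "\<not> 0 < A * B"
    by (simp add: A_def B_def)
  moreover have "A \<noteq> 0" "B \<noteq> 0"
    using open_slabs_avoids_hyperplanes[OF L b, of n] off by (simp_all add: A_def B_def)
  ultimately have "A * B < 0"
    using mult_eq_0_iff[of A B] by linarith
  then have signs: "(A > 0 \<and> B < 0) \<or> (A < 0 \<and> B > 0)"
    by (simp add: mult_less_0_iff)
  define t where "t = A / (A - B)"
  have "0 \<le> t" "t < 1"
    using signs by (auto simp: t_def divide_simps)
  then have "(1 - t) *\<^sub>R L + t *\<^sub>R Z \<in> open_slabs pos p"
    using open_slabs_segment[OF L Z] by blast
  moreover have "pair ((1 - t) *\<^sub>R L + t *\<^sub>R Z) b - of_int n * real p = (1 - t) * A + t * B"
    unfolding pair_add pair_scaleR A_def B_def by (simp add: algebra_simps)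
  moreover have "(1 - t) * A + t * B = 0"
    using signs by (auto simp: t_def divide_simps algebra_simps)
  ultimately show False
    using open_slabs_avoids_hyperplanes[OF _ b, where m = n] by fastforce
qed

section \<open>Reflections in \<open>W\<^sub>I\<^sub>,\<^sub>p\<close>\<close>

lemma simple_coordinate_outside_span_zero:
  assumes I: "I \<subseteq> S" and x: "x \<in> span I" "x = (\<Sum>s\<in>S. u s *\<^sub>R s)"
    and s: "s \<in> S" "s \<notin> I"
  shows "u s = 0"
proof -
  have fin: "finite I"
    using I finite_simple_roots finite_subset by blast
  obtain v where "x = (\<Sum>t\<in>I. v t *\<^sub>R t)"
    using x(1) span_finite[OF fin] by blast
  also have "\<dots> = (\<Sum>t\<in>S. (if t \<in> I then v t else 0) *\<^sub>R t)"
    using I finite_simple_roots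
    by (simp add: if_distrib[of "\<lambda>c. c *\<^sub>R _"] sum.inter_restrict[symmetric] Int_absorb1 cong: if_cong)
  finally show ?thesis
    using simple_coordinates_unique[of u "\<lambda>t. if t \<in> I then v t else 0" s] x(2) s by simp
qed

lemma pos_root_in_span_zspan:
  assumes I: "I \<subseteq> S" and b: "b \<in> pos" "b \<in> span I"
  shows "b \<in> zspan I"
proof -
  obtain c where c: "\<forall>s\<in>S. 0 \<le> c s" "b = (\<Sum>s\<in>S. of_int (c s) *\<^sub>R s)"
    using pos_root_coordinates[OF b(1)] .
  have "c s = 0" if "s \<in> S" "s \<notin> I" for s
    using simple_coordinate_outside_span_zero[OF I b(2) c(2) that] by simp
  then have "b = (\<Sum>s\<in>S. of_int (if s \<in> I then c s else 0) *\<^sub>R s)"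
    unfolding c(2) by (intro sum.cong) auto
  then have "b = (\<Sum>s\<in>I. of_int (c s) *\<^sub>R s)"
    using I finite_simple_roots by (simp add: sum_if_mem_scaleR)
  then show ?thesis
    unfolding zspan_def using I finite_simple_roots finite_subset
    by (intro CollectI exI[of _ I] exI[of _ c]) auto
qed

text \<open>Induction on the height: a non-simple positive root \<open>b\<close> in the span of \<open>I\<close> has an acute
  simple root \<open>a \<in> I\<close>, and \<open>s\<^sub>b = s\<^sub>a s\<^sub>b\<^sub>' s\<^sub>a\<close> with \<open>b' = s\<^sub>a b\<close> of smaller height.\<close>
lemma root_refl_pos_WIp:
  assumes I: "I \<subseteq> S"
    and "b \<in> pos" "b \<in> span I" "b = (\<Sum>s\<in>S. of_int (c s) *\<^sub>R s)" "\<forall>s\<in>S. 0 \<le> c s"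
  shows "aff_refl b 0 \<in> WIp I p"
  using assms(2-)
proof (induction "nat (\<Sum>s\<in>S. c s)" arbitrary: b c rule: less_induct)
  case less
  show ?case
  proof (cases "b \<in> I")
    case True
    then show ?thesis
      unfolding WIp_def by (intro gen_group_base) blast
  next
    case False
    have b: "b \<in> Phi" "b \<noteq> 0"
      using less.prems(1) pos_subset_roots root_nonzero by auto
    obtain a where a: "a \<in> S" "0 < c a" "0 < inner a b"
      using exists_acute_summand[OF less.prems(3,4) b(2)] by blast
    have aI: "a \<in> I"
      using simple_coordinate_outside_span_zero[OF I less.prems(2,3) a(1)] a(2) by auto
    have a_root: "a \<in> Phi" "a \<noteq> 0"
      using a(1) simple_roots_subset root_nonzero by auto
    obtain j where j: "pair b a = of_int j"
      using pair_roots_Ints[OF b(1) a_root(1)] Ints_cases by blast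
    have "0 < pair b a"
      using a(3) a_root(2) by (simp add: pair_def inner_commute)
    then have "j \<ge> 1"
      using j by simp
    define b' where "b' = root_refl a b"
    have b': "b' \<in> pos"
      unfolding b'_def using root_refl_simple_pos(1)[OF a(1) less.prems(1)] False aI by blast
    obtain d where d: "\<forall>s\<in>S. 0 \<le> d s" "b' = (\<Sum>s\<in>S. of_int (d s) *\<^sub>R s)"
      using pos_root_coordinates[OF b'] .
    have "(\<Sum>s\<in>S. d s) = (\<Sum>s\<in>S. c s) - j"
      using root_refl_simple_height[OF a(1) less.prems(3) j] d(2) unfolding b'_def .
    moreover have "0 \<le> (\<Sum>s\<in>S. d s)"
      using d(1) by (simp add: sum_nonneg)
    ultimately have "nat (\<Sum>s\<in>S. d s) < nat (\<Sum>s\<in>S. c s)"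
      using \<open>j \<ge> 1\<close> by linarith
    moreover have "b' \<in> span I"
      unfolding b'_def root_refl_def by (rule span_diff[OF less.prems(2) span_scale[OF span_base[OF aI]]])
    ultimately have IH: "aff_refl b' 0 \<in> WIp I p"
      using less.hyps b' d by blast
    have s_a: "aff_refl a 0 \<in> WIp I p"
      unfolding WIp_def using aI by (intro gen_group_base) blast
    have "aff_refl b 0 = aff_refl a 0 \<circ> aff_refl b' 0 \<circ> aff_refl a 0"
      using aff_refl_conj[OF a_root(2), of 0 b' 0] root_refl_involution[OF a_root(2)]
      by (auto simp: b'_def)
    then show ?thesis
      using s_a IH unfolding WIp_def by (simp add: gen_group_comp)
  qed
qed

lemma aff_refl_WIp:
  assumes I: "I \<subseteq> S" and b: "b \<in> Phi" "b \<in> span I"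
  shows "aff_refl b (of_int j * real p) \<in> WIp I p"
proof -
  have pos_case: "aff_refl a (of_int i * real p) \<in> WIp I p" if a: "a \<in> pos" "a \<in> span I" for a i
  proof -
    obtain c where "\<forall>s\<in>S. 0 \<le> c s" "a = (\<Sum>s\<in>S. of_int (c s) *\<^sub>R s)"
      using pos_root_coordinates[OF a(1)] .
    then have "aff_refl a 0 \<in> WIp I p"
      using root_refl_pos_WIp[OF I a] by blast
    moreover have "transl ((of_int i * real p) *\<^sub>R a) \<in> WIp I p"
      using transl_WIp[OF pos_root_in_span_zspan[OF I a]] .
    moreover have "aff_refl a (of_int i * real p) = transl ((of_int i * real p) *\<^sub>R a) \<circ> aff_refl a 0"
      by (auto simp: aff_refl_def transl_def)
    ultimately show ?thesis
      unfolding WIp_def by (simp add: gen_group_comp)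
  qed
  show ?thesis
    using root_pos_or_neg[OF b(1)]
  proof
    assume "- b \<in> pos"
    then have "aff_refl (- b) (of_int (- j) * real p) \<in> WIp I p"
      using pos_case b(2) span_neg by blast
    moreover have "aff_refl (- b) (- K) = aff_refl b K" for K
      by (auto simp: aff_refl_def pair_uminus_right)
    ultimately show ?thesis
      by simp
  qed (use pos_case b(2) in blast)
qed

section \<open>Walls of the fundamental alcove\<close>

lemma wall_has_point_off_hyperplane:
  assumes c: "c \<in> Phi" and b: "b \<in> Phi"
    and hull: "affine hull ({x. pair (x + rho Phi S) c = C} \<inter> alcove_cl Phi S p)
      = {x. pair (x + rho Phi S) c = C}"
    and not_wall: "\<not> (b = c \<and> B = C)" "\<not> (b = - c \<and> B = - C)"
  shows "\<exists>Z\<in>closed_slabs pos p. pair Z c = C \<and> pair Z b \<noteq> B"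
proof (rule ccontr)
  assume "\<not> ?thesis"
  then have sub_cl: "{x. pair (x + rho Phi S) c = C} \<inter> alcove_cl Phi S p \<subseteq> {x. pair (x + rho Phi S) b = B}"
    by (auto simp: mem_alcove_cl_iff)
  have aff: "affine {x. pair (x + rho Phi S) b = B}"
  proof -
    have hyperplane: "{x. pair (x + rho Phi S) b = B}
        = {x. inner ((2 / inner b b) *\<^sub>R b) x = B - pair (rho Phi S) b}"
      by (auto simp: pair_add pair_def inner_commute add_divide_distrib algebra_simps)
    show ?thesis
      unfolding hyperplane by (rule affine_hyperplane)
  qed
  have "{x. pair (x + rho Phi S) c = C} \<subseteq> {x. pair (x + rho Phi S) b = B}"
    using hull_minimal[of _ _ affine, OF sub_cl aff] unfolding hull .
  then have sub: "{y. pair y c = C} \<subseteq> {y. pair y b = B}"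
    by (auto dest: subsetD[where c = "_ - rho Phi S"])
  obtain t where "b = t *\<^sub>R c"
    using parallel_if_hyperplane_subset[OF root_nonzero[OF c] sub] by blast
  then have "b = c \<or> b = - c"
    using parallel_roots[OF b c] by blast
  moreover have "pair ((C / 2) *\<^sub>R c) c = C"
    using root_nonzero[OF c] by (simp add: pair_scaleR pair_self)
  then have "pair ((C / 2) *\<^sub>R c) b = B"
    using sub by blast
  ultimately show False
    using not_wall root_nonzero[OF c] by (auto simp: pair_scaleR pair_self pair_uminus_right)
qed

lemma wall_refl_same_side:
  assumes wall: "wall_refl Phi S p s" and L: "L \<in> open_slabs pos p" and b: "b \<in> Phi"
    and not_negated: "\<not> (\<forall>x. pair (s x) b - of_int n * real p = - (pair x b - of_int n * real p))"
  shows "0 < (pair L b - of_int n * real p) * (pair (s L) b - of_int n * real p)"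
proof -
  obtain c k where c: "c \<in> Phi" and s_eq: "s = aff_refl c (of_int k * real p)"
    and hull: "affine hull ({x. pair (x + rho Phi S) c = of_int k * real p} \<inter> alcove_cl Phi S p)
      = {x. pair (x + rho Phi S) c = of_int k * real p}"
    using wall unfolding wall_refl_def by blast
  have c_nz: "c \<noteq> 0"
    using root_nonzero[OF c] .
  have "\<not> (b = c \<and> of_int n * real p = of_int k * real p)"
    "\<not> (b = - c \<and> of_int n * real p = - (of_int k * real p))"
    using not_negated c_nz by (auto simp: s_eq pair_aff_refl_self pair_uminus_right)
  then obtain Z where Z: "Z \<in> closed_slabs pos p" "pair Z c = of_int k * real p"
    "pair Z b \<noteq> of_int n * real p"
    using wall_has_point_off_hyperplane[OF c b hull] by blast
  have sZ: "s Z = Z"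
    using Z(2) by (simp add: s_eq aff_refl_eq_diff)
  obtain i where i: "pair c b = of_int i"
    using pair_roots_Ints[OF c b] Ints_cases by blast
  have s_pullback: "pair (s x) b - of_int n * real p
      = pair x (root_refl c b) - of_int (n - k * i) * real p" for x
    using pair_aff_refl_eq_root_refl[OF c_nz] by (simp add: s_eq i algebra_simps)
  have "0 < (pair L b - of_int n * real p) * (pair Z b - of_int n * real p)"
    using open_slabs_same_side[OF L Z(1) b Z(3)] .
  moreover have "pair Z (root_refl c b) \<noteq> of_int (n - k * i) * real p"
    using s_pullback[of Z] sZ Z(3) by simp
  then have "0 < (pair L (root_refl c b) - of_int (n - k * i) * real p)
      * (pair Z (root_refl c b) - of_int (n - k * i) * real p)"
    by (rule open_slabs_same_side[OF L Z(1) root_refl_root[OF c b]])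
  then have "0 < (pair (s L) b - of_int n * real p) * (pair Z b - of_int n * real p)"
    using s_pullback[of L] s_pullback[of Z] sZ by simp
  ultimately show ?thesis
    by (auto simp: zero_less_mult_iff)
qed

lemma conj_wall_refl_same_side:
  assumes I: "I \<subseteq> S" and wall: "wall_refl Phi S p s" and w: "w \<in> Wp Phi p"
    and \<beta>: "\<beta> \<in> Phi" and conj: "w \<circ> s = aff_refl \<beta> (of_int j * real p) \<circ> w"
    and not_WIp: "aff_refl \<beta> (of_int j * real p) \<notin> WIp I p"
    and L: "L \<in> open_slabs pos p" and a: "a \<in> Phi" "a \<in> span I"
  shows "0 < (pair (w (s L)) a - of_int m * real p) * (pair (w L) a - of_int m * real p)"
proof -
  obtain b n where b: "b \<in> Phi"
    and pull: "\<And>x. pair (w x) a - of_int m * real p = pair x b - of_int n * real p"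
    using Wp_pullback_affine_root[OF w a(1)] by blast
  have "\<not> (\<forall>x. pair (s x) b - of_int n * real p = - (pair x b - of_int n * real p))"
  proof
    assume negated: "\<forall>x. pair (s x) b - of_int n * real p = - (pair x b - of_int n * real p)"
    have "pair (aff_refl \<beta> (of_int j * real p) u) a - of_int m * real p = - (pair u a - of_int m * real p)"
      for u
    proof -
      obtain x where "u = w x"
        using surjD[OF bij_is_surj[OF Wp_bij[OF w]]] by blast
      moreover have "aff_refl \<beta> (of_int j * real p) (w x) = w (s x)"
        using fun_cong[OF conj, of x] by simp
      ultimately show ?thesis
        using negated pull by simp
    qed
    then obtain t where "a = t *\<^sub>R \<beta>"
      using parallel_if_aff_refl_negates root_nonzero[OF \<beta>] root_nonzero[OF a(1)] by blast
    then have "a = \<beta> \<or> a = - \<beta>"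
      using parallel_roots[OF a(1) \<beta>] by blast
    then have "\<beta> \<in> span I"
      using a(2) span_neg[of a I] by auto
    then show False
      using aff_refl_WIp[OF I \<beta>] not_WIp by blast
  qed
  then show ?thesis
    using wall_refl_same_side[OF wall L b] pull by (simp add: mult.commute)
qed

lemma aff_refl_WIp_leaves_alcove_I:
  assumes I: "I \<subseteq> S" and \<beta>: "\<beta> \<in> Phi" and in_WIp: "aff_refl \<beta> (of_int j * real p) \<in> WIp I p"
    and off: "pair y \<beta> \<noteq> of_int j * real p" and y: "y \<in> closed_slabs (pos \<inter> zspan I) p"
  shows "aff_refl \<beta> (of_int j * real p) y \<notin> open_slabs (pos \<inter> zspan I) p"
proof
  define y' where "y' = aff_refl \<beta> (of_int j * real p) y"
  assume "aff_refl \<beta> (of_int j * real p) y \<in> open_slabs (pos \<inter> zspan I) p"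
  then have y': "y' \<in> open_slabs (pos \<inter> zspan I) p"
    by (simp add: y'_def)
  have "y' - y = (- (pair y \<beta> - of_int j * real p)) *\<^sub>R \<beta>"
    by (simp add: y'_def aff_refl_eq_diff algebra_simps)
  moreover have "y' - y \<in> span I"
    unfolding y'_def by (rule WIp_displacement_in_span[OF in_WIp])
  ultimately have "(- (pair y \<beta> - of_int j * real p)) *\<^sub>R \<beta> \<in> span I"
    by simp
  then have "inverse (- (pair y \<beta> - of_int j * real p)) *\<^sub>R (- (pair y \<beta> - of_int j * real p)) *\<^sub>R \<beta>
      \<in> span I"
    by (rule span_scale)
  then have "\<beta> \<in> span I"
    using off by simp
  have sum: "pair y' \<beta> + pair y \<beta> = 2 * (of_int j * real p)"
    using root_nonzero[OF \<beta>] by (simp add: y'_def pair_aff_refl_self)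
  obtain \<gamma> i where \<gamma>: "\<gamma> \<in> pos \<inter> zspan I" and "pair y' \<gamma> + pair y \<gamma> = 2 * (of_int i * real p)"
  proof (cases "\<beta> \<in> pos")
    case True
    then show ?thesis
      using that[of \<beta> j] sum pos_root_in_span_zspan[OF I _ \<open>\<beta> \<in> span I\<close>] by blast
  next
    case False
    then have "- \<beta> \<in> pos" "- \<beta> \<in> span I"
      using root_pos_or_neg[OF \<beta>] span_neg[OF \<open>\<beta> \<in> span I\<close>] by auto
    then show ?thesis
      using that[of "- \<beta>" "- j"] sum pos_root_in_span_zspan[OF I] by (auto simp: pair_uminus_right)
  qed
  moreover have "0 < pair y' \<gamma> \<and> pair y' \<gamma> < real p" "0 \<le> pair y \<gamma> \<and> pair y \<gamma> \<le> real p"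
    using y y' \<gamma> by (auto simp: open_slabs_def closed_slabs_def)
  ultimately show False
    using int_multiple_not_in_open_interval[of i p] by linarith
qed

lemma conj_wall_refl_in_alcove_I_iff:
  assumes I: "I \<subseteq> S" and wall: "wall_refl Phi S p s" and w: "w \<in> Wp Phi p"
    and \<beta>: "\<beta> \<in> Phi" and conj: "w \<circ> s = aff_refl \<beta> (of_int j * real p) \<circ> w"
    and L: "L \<in> open_slabs pos p" and w_cl: "w L \<in> closed_slabs (pos \<inter> zspan I) p"
  shows "w (s L) \<in> open_slabs (pos \<inter> zspan I) p \<longleftrightarrow> aff_refl \<beta> (of_int j * real p) \<notin> WIp I p"
proof
  assume in_alcove: "w (s L) \<in> open_slabs (pos \<inter> zspan I) p"
  show "aff_refl \<beta> (of_int j * real p) \<notin> WIp I p"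
  proof
    assume "aff_refl \<beta> (of_int j * real p) \<in> WIp I p"
    then have "aff_refl \<beta> (of_int j * real p) (w L) \<notin> open_slabs (pos \<inter> zspan I) p"
      by (rule aff_refl_WIp_leaves_alcove_I[OF I \<beta> _ Wp_image_avoids_hyperplanes[OF w L \<beta>] w_cl])
    moreover have "w (s L) = aff_refl \<beta> (of_int j * real p) (w L)"
      using fun_cong[OF conj, of L] by simp
    ultimately show False
      using in_alcove by simp
  qed
next
  assume not_WIp: "aff_refl \<beta> (of_int j * real p) \<notin> WIp I p"
  have "0 < pair (w (s L)) a * pair (w L) a \<and> 0 < (pair (w (s L)) a - real p) * (pair (w L) a - real p)"
    if "a \<in> pos \<inter> zspan I" for a
  proof -
    have "a \<in> Phi" "a \<in> span I"
      using that pos_subset_roots zspan_subset_span by auto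
    then show ?thesis
      using conj_wall_refl_same_side[OF I wall w \<beta> conj not_WIp L, of a 0]
        conj_wall_refl_same_side[OF I wall w \<beta> conj not_WIp L, of a 1]
      by simp
  qed
  then show "w (s L) \<in> open_slabs (pos \<inter> zspan I) p"
    using open_slabs_if_same_side[OF w_cl] by blast
qed

end

theorem proposition4p13:
  fixes X Phi S I :: "'a::euclidean_space set"
    and p :: nat and s w :: "'a \<Rightarrow> 'a" and lam mu :: 'a
  assumes "root_datum X Phi" and "is_base Phi S" and "sc_derived X S"
    and "prime p" and "real p \<ge> coxeter Phi S"
    and "I \<subseteq> S"
    and "s \<in> Wp Phi p" and "wall_refl Phi S p s"
    and "lam \<in> alcove Phi S p \<inter> X"
    and "mu \<in> alcove_cl Phi S p \<inter> X"
    and "{v \<in> Wp Phi p. dot Phi S v mu = mu} = {id, s}"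
    and "w \<in> WIlam Phi S I p lam"
  shows "dot Phi S (w \<circ> s) lam \<in> alcove_I Phi S I p \<inter> X
           \<longleftrightarrow> w \<circ> s \<circ> inv w \<notin> WIp I p"
proof -
  interpret based_root_datum X Phi S
    using assms(1,2) by unfold_locales
  obtain c k where c: "c \<in> Phi" and s_eq: "s = aff_refl c (of_int k * real p)"
    using assms(8) unfolding wall_refl_def by blast
  have w: "w \<in> Wp Phi p" and w_cl: "w (lam + rho Phi S) \<in> closed_slabs (pos \<inter> zspan I) p"
    using assms(12) by (auto simp: WIlam_def dot_def mem_alcove_I_cl_iff)
  obtain \<beta> j where \<beta>: "\<beta> \<in> Phi" and conj: "w \<circ> s = aff_refl \<beta> (of_int j * real p) \<circ> w"
    using Wp_conj_aff_refl[OF w c] s_eq by blast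
  have "w \<circ> inv w = id"
    using surj_iff bij_is_surj Wp_bij[OF w] by blast
  then have conj_inv: "w \<circ> s \<circ> inv w = aff_refl \<beta> (of_int j * real p)"
    unfolding conj by (simp only: comp_assoc comp_id)
  define L where "L = lam + rho Phi S"
  have L: "L \<in> open_slabs pos p"
    using assms(9) by (simp add: L_def mem_alcove_iff)
  have "dot Phi S (w \<circ> s) lam \<in> X"
    using Wp_shifted_X[OF assms(3) Wp_comp[OF w assms(7)], of L] assms(9) by (simp add: dot_def L_def)
  moreover have "dot Phi S (w \<circ> s) lam + rho Phi S = w (s L)"
    by (simp add: dot_def L_def)
  ultimately show ?thesis
    using conj_wall_refl_in_alcove_I_iff[OF assms(6,8) w \<beta> conj L w_cl[folded L_def]]
    by (simp add: mem_alcove_I_iff conj_inv)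
qed

end
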